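(* Fix $w>0$. For $\rho\in(-1,1)$, let $(x,y)$ be bivariate normal with mean $(0,0)$, unit variances and correlation $\rho$, and code each real $t$ by $c(t)=0$ if $t\le -w$, $1$ if $-w<t\le 0$, $2$ if $0<t\le w$, $3$ if $t>w$. Let $I_{2,\rho,w}$ be the Fisher information about $\rho$ contained in $k$ i.i.d. observations of the pair of codes $(c(x),c(y))$ (a multinomial model with the 16 cell probabilities $P_{i,j}(\rho,w)=\Pr(c(x)=i,c(y)=j)$), i.e. $I_{2,\rho,w}=k\sum_{i,j}\frac{(\partial_\rho P_{i,j}(\rho,w))^2}{P_{i,j}(\rho,w)}$. Let $$I_{1,\rho}=2k\frac{1}{4\pi^2(1-\rho^2)}\left[\frac{1}{\frac14+\frac{\arcsin\rho}{2\pi}}+\frac{1}{\frac14-\frac{\arcsin\rho}{2\pi}}\right]$$ be the Fisher information about $\rho$ in $k$ i.i.d. observations of the signs $(\mathrm{sgn}(x),\mathrm{sgn}(y))$, and let $R_{\rho,w}=I_{2,\rho,w}/I_{1,\rho}$. Then at $\rho=0$ (equivalently, in the limit $\rho\to0$) $$R_{0,w}=[g(w)]^2,\qquad g(w)=\frac12\left[\frac{\left(1-e^{-w^2/2}\right)^2}{\Phi(w)-\frac12}+\frac{e^{-w^2}}{1-\Phi(w)}\right],$$ where $\Phi$ is the standard normal cumulative distribution function.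
   Context: $\Phi(x)=\int_{-\infty}^x\frac{1}{\sqrt{2\pi}}e^{-t^2/2}\,dt$. The ratio $R_{\rho,w}$ measures the variance reduction of the maximum likelihood estimator of $\rho$ from 2-bit coded random projections relative to the 1-bit (sign) estimator. *)

theory Defs
  imports "HOL-Probability.Probability"
begin

definition Phi :: "real \<Rightarrow> real" where
  "Phi x = (LBINT t:{..x}. std_normal_density t)"

definition bvn_density :: "real \<Rightarrow> real \<times> real \<Rightarrow> real" where
  "bvn_density \<rho> p = (case p of (x, y) \<Rightarrow>
     1 / (2 * pi * sqrt (1 - \<rho>\<^sup>2)) * exp (- (x\<^sup>2 - 2 * \<rho> * x * y + y\<^sup>2) / (2 * (1 - \<rho>\<^sup>2))))"

text \<open>Coding intervals: c(t) = i iff t in code_set w i.\<close>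
definition code_set :: "real \<Rightarrow> nat \<Rightarrow> real set" where
  "code_set w i = (if i = 0 then {..-w} else if i = 1 then {-w<..0}
                   else if i = 2 then {0<..w} else {w<..})"

definition cellP :: "real \<Rightarrow> real \<Rightarrow> nat \<Rightarrow> nat \<Rightarrow> real" where
  "cellP \<rho> w i j = (LINT p|lborel. indicator (code_set w i \<times> code_set w j) p * bvn_density \<rho> p)"

definition I2 :: "nat \<Rightarrow> real \<Rightarrow> real \<Rightarrow> real" where
  "I2 k \<rho> w = real k * (\<Sum>i<4. \<Sum>j<4. (deriv (\<lambda>r. cellP r w i j) \<rho>)\<^sup>2 / cellP \<rho> w i j)"

definition I1 :: "nat \<Rightarrow> real \<Rightarrow> real" where
  "I1 k \<rho> = 2 * real k * (1 / (4 * pi\<^sup>2 * (1 - \<rho>\<^sup>2))) *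
     (1 / (1/4 + arcsin \<rho> / (2 * pi)) + 1 / (1/4 - arcsin \<rho> / (2 * pi)))"

definition R :: "nat \<Rightarrow> real \<Rightarrow> real \<Rightarrow> real" where
  "R k \<rho> w = I2 k \<rho> w / I1 k \<rho>"

definition g :: "real \<Rightarrow> real" where
  "g w = 1/2 * ((1 - exp (- w\<^sup>2 / 2))\<^sup>2 / (Phi w - 1/2) + exp (- w\<^sup>2) / (1 - Phi w))"

end

theory Submission
  imports Defs
begin

text \<open>At \<open>\<rho> = 0\<close> the bivariate density factorises as \<open>\<phi>(x)\<phi>(y)\<close> and its \<open>\<rho>\<close>-derivative
  is \<open>x\<phi>(x) \<cdot> y\<phi>(y)\<close>. Differentiating under the integral sign (dominated convergence; for
  \<open>|\<rho>| \<le> 1/2\<close> the mean value theorem bounds the difference quotients by an integrable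
  Gaussian envelope), every cell satisfies \<open>P\<^sub>i\<^sub>j = p\<^sub>i p\<^sub>j\<close> and \<open>\<partial>\<^sub>\<rho>P\<^sub>i\<^sub>j = q\<^sub>i q\<^sub>j\<close>, where \<open>p\<^sub>i\<close> is the
  normal mass and \<open>q\<^sub>i\<close> the first moment of the \<open>i\<close>-th coding interval. Hence the Fisher sum is
  \<open>(\<Sum> q\<^sub>i\<^sup>2/p\<^sub>i)\<^sup>2\<close>. Since \<open>t\<phi>(t) = -\<phi>'(t)\<close>, the moments are \<open>-\<phi>(w), \<phi>(w)-\<phi>(0), \<phi>(0)-\<phi>(w), \<phi>(w)\<close>
  and the masses \<open>1-\<Phi>(w), \<Phi>(w)-1/2, \<Phi>(w)-1/2, 1-\<Phi>(w)\<close>, which gives \<open>\<Sum> q\<^sub>i\<^sup>2/p\<^sub>i = 2g(w)/\<pi>\<close>,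
  while \<open>I\<^sub>1 = 4k/\<pi>\<^sup>2\<close> at \<open>\<rho> = 0\<close>.\<close>

section \<open>Masses and first moments of the standard normal distribution\<close>

abbreviation phi :: "real \<Rightarrow> real" where
  "phi \<equiv> std_normal_density"

lemma set_integrable_if_integrable:
  fixes f :: "real \<Rightarrow> real"
  shows "integrable lborel f \<Longrightarrow> A \<in> sets borel \<Longrightarrow> set_integrable lborel A f"
  unfolding set_integrable_def by (rule integrable_mult_indicator) auto

lemma set_integral_insert_point:
  fixes f :: "real \<Rightarrow> real"
  assumes "integrable lborel f" and "S \<in> sets borel"
  shows "(LBINT t:insert a S. f t) = (LBINT t:S. f t)"
proof (rule set_integral_cong_set)
  show "AE t in lborel. t \<in> S \<longleftrightarrow> t \<in> insert a S"
    using AE_lborel_singleton[of a] by eventually_elim auto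
qed (use assms set_integrable_if_integrable in \<open>auto simp: set_integrable_def set_borel_measurable_def\<close>)

lemma set_integral_Iic_Ioi:
  fixes f :: "real \<Rightarrow> real"
  assumes "integrable lborel f"
  shows "(LBINT t:{..a}. f t) + (LBINT t:{a<..}. f t) = (LBINT t. f t)"
proof -
  have "(LBINT t:{..a} \<union> {a<..}. f t) = (LBINT t:{..a}. f t) + (LBINT t:{a<..}. f t)"
    using assms by (intro set_integral_Un set_integrable_if_integrable) auto
  moreover have "{..a} \<union> {a<..} = UNIV" by auto
  ultimately show ?thesis by (simp add: set_lebesgue_integral_def)
qed

lemma set_integral_Iic_split:
  fixes f :: "real \<Rightarrow> real"
  assumes "integrable lborel f" and "a \<le> b"
  shows "(LBINT t:{..b}. f t) = (LBINT t:{..a}. f t) + (LBINT t:{a<..b}. f t)"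
proof -
  have "{..a} \<union> {a<..b} = {..b}" using assms(2) by auto
  moreover have "{..a} \<inter> {a<..b} = {}" by auto
  ultimately show ?thesis
    using set_integral_Un[of "{..a}" "{a<..b}" lborel f] assms(1)
    by (simp add: set_integrable_if_integrable)
qed

lemma set_integral_Ioi_split:
  fixes f :: "real \<Rightarrow> real"
  assumes "integrable lborel f" and "a \<le> b"
  shows "(LBINT t:{a<..}. f t) = (LBINT t:{a<..b}. f t) + (LBINT t:{b<..}. f t)"
proof -
  have "{a<..b} \<union> {b<..} = {a<..}" using assms(2) by auto
  moreover have "{a<..b} \<inter> {b<..} = {}" by auto
  ultimately show ?thesis
    using set_integral_Un[of "{a<..b}" "{b<..}" lborel f] assms(1)
    by (simp add: set_integrable_if_integrable)
qed

lemma set_integral_Iic_reflect: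
  fixes f :: "real \<Rightarrow> real"
  assumes "\<And>t. f (- t) = f t"
  shows "(LBINT t:{..-a}. f t) = (LBINT t:{a..}. f t)"
  using set_integral_reflect[of "{..-a}" f] by (simp add: assms atLeast_def)

lemma std_normal_density_minus [simp]: "phi (- t) = phi t"
  by (simp add: normal_density_def)

lemma integrable_std_normal_density: "integrable lborel phi"
  using integrable_std_normal_moment[of 0] by simp

lemma std_normal_Ioi: "(LBINT t:{a<..}. phi t) = 1 - Phi a"
  using set_integral_Iic_Ioi[OF integrable_std_normal_density, of a]
  by (simp add: Phi_def)

lemma Phi_minus: "Phi (- x) = 1 - Phi x"
proof -
  have "Phi (- x) = (LBINT t:{x..}. phi t)"
    unfolding Phi_def by (rule set_integral_Iic_reflect) simp
  also have "\<dots> = (LBINT t:{x<..}. phi t)"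
  proof -
    have "{x..} = insert x {x<..}" by auto
    then show ?thesis
      using set_integral_insert_point[OF integrable_std_normal_density, of "{x<..}" x] by simp
  qed
  finally show ?thesis by (simp add: std_normal_Ioi)
qed

lemma Phi_zero: "Phi 0 = 1/2"
  using Phi_minus[of 0] by simp

lemma std_normal_Ioc: "a \<le> b \<Longrightarrow> (LBINT t:{a<..b}. phi t) = Phi b - Phi a"
  using set_integral_Iic_split[OF integrable_std_normal_density] by (simp add: Phi_def)

lemma std_normal_density_has_real_derivative:
  "((\<lambda>t. phi t) has_real_derivative - (t * phi t)) (at t within S)"
proof -
  have "((\<lambda>t. c * exp (- t\<^sup>2 / 2)) has_real_derivative - (t * (c * exp (- t\<^sup>2 / 2)))) (at t within S)"
    for c :: real
    by (auto intro!: derivative_eq_intros simp: algebra_simps)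
  then show ?thesis unfolding std_normal_density_def .
qed

lemma integrable_std_normal_first_moment: "integrable lborel (\<lambda>t. t * phi t)"
  using integrable_std_normal_moment[of 1] by (simp add: mult.commute)

lemma std_normal_first_moment_Icc:
  assumes "a \<le> b"
  shows "(LBINT t:{a..b}. t * phi t) = phi a - phi b"
proof -
  have "(LBINT t:{a..b}. t * phi t) = (- phi b) - (- phi a)"
    unfolding set_lebesgue_integral_def
  proof (rule integral_FTC_atLeastAtMost[OF assms])
    show "((\<lambda>t. - phi t) has_vector_derivative t * phi t) (at t within {a..b})" for t
      using std_normal_density_has_real_derivative[of t] DERIV_minus
      by (fastforce simp: has_real_derivative_iff_has_vector_derivative[symmetric])
    show "continuous_on {a..b} (\<lambda>t. t * phi t)"
      unfolding std_normal_density_def by (intro continuous_intros) auto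
  qed
  then show ?thesis by simp
qed

lemma std_normal_first_moment_Ioc:
  assumes "a \<le> b"
  shows "(LBINT t:{a<..b}. t * phi t) = phi a - phi b"
proof -
  have "{a..b} = insert a {a<..b}" using assms by auto
  then show ?thesis
    using std_normal_first_moment_Icc[OF assms]
      set_integral_insert_point[OF integrable_std_normal_first_moment, of "{a<..b}" a] by simp
qed

lemma std_normal_first_moment_Ioi_zero: "(LBINT t:{0<..}. t * phi t) = phi 0"
proof -
  have "(LBINT t. phi t * \<bar>t\<bar>) = sqrt (2 / pi)"
    using integral_std_normal_moment_abs_odd[of 0] by simp
  moreover have "(LBINT t. phi t * t) = 0"
    using integral_std_normal_moment_odd[of 0] by simp
  moreover have "(LBINT t:{0<..}. t * phi t) = (LBINT t. (phi t * \<bar>t\<bar> + phi t * t) / 2)"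
    unfolding set_lebesgue_integral_def
    by (rule Bochner_Integration.integral_cong) (auto simp: indicator_def)
  moreover have "integrable lborel (\<lambda>t. phi t * \<bar>t\<bar>)" "integrable lborel (\<lambda>t. phi t * t)"
    using integrable_std_normal_moment_abs[of 1] integrable_std_normal_moment[of 1] by simp_all
  moreover have "sqrt (2 / pi) / 2 = phi 0"
  proof -
    have "sqrt (4::real) = 2" by (rule real_sqrt_unique) auto
    then have "sqrt (2 / pi) / 2 = sqrt (2 / pi / 4)"
      by (simp only: real_sqrt_divide)
    also have "2 / pi / 4 = 1 / (2 * pi)" by simp
    finally show ?thesis
      unfolding std_normal_density_def by (simp add: real_sqrt_divide)
  qed
  ultimately show ?thesis by simp
qed

lemma std_normal_first_moment_Ioi: "(LBINT t:{a<..}. t * phi t) = phi a"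
proof (cases "0 \<le> a")
  case True
  then show ?thesis
    using set_integral_Ioi_split[OF integrable_std_normal_first_moment True]
    by (simp add: std_normal_first_moment_Ioc std_normal_first_moment_Ioi_zero)
next
  case False
  then show ?thesis
    using set_integral_Ioi_split[OF integrable_std_normal_first_moment, of a 0]
    by (simp add: std_normal_first_moment_Ioc std_normal_first_moment_Ioi_zero)
qed

lemma std_normal_first_moment_Iic: "(LBINT t:{..a}. t * phi t) = - phi a"
  using set_integral_Iic_Ioi[OF integrable_std_normal_first_moment, of a]
    integral_std_normal_moment_odd[of 0]
  by (simp add: std_normal_first_moment_Ioi mult.commute)

section \<open>The bivariate normal density and its derivative in \<open>\<rho>\<close>\<close>

definition bvn_density_deriv :: "real \<Rightarrow> real \<times> real \<Rightarrow> real" where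
  "bvn_density_deriv \<rho> p = (case p of (x, y) \<Rightarrow> bvn_density \<rho> (x, y) *
     (\<rho> / (1 - \<rho>\<^sup>2) + (x * y * (1 - \<rho>\<^sup>2) - \<rho> * (x\<^sup>2 - 2 * \<rho> * x * y + y\<^sup>2)) / (1 - \<rho>\<^sup>2)\<^sup>2))"

lemma bvn_density_has_real_derivative:
  assumes "\<bar>\<rho>\<bar> < 1"
  shows "((\<lambda>r. bvn_density r p) has_real_derivative bvn_density_deriv \<rho> p) (at \<rho>)"
proof -
  obtain x y where p: "p = (x, y)" by (cases p)
  have a: "0 < 1 - \<rho>\<^sup>2" using assms by (simp add: abs_square_less_1)
  have d1: "((\<lambda>r. 1 / (2 * pi * sqrt (1 - r\<^sup>2))) has_real_derivative
      1 / (2 * pi * sqrt (1 - \<rho>\<^sup>2)) * (\<rho> / (1 - \<rho>\<^sup>2))) (at \<rho>)"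
    using a by (auto intro!: derivative_eq_intros simp: divide_simps)
  have d2: "((\<lambda>r. exp (- (x\<^sup>2 - 2 * r * x * y + y\<^sup>2) / (2 * (1 - r\<^sup>2)))) has_real_derivative
      exp (- (x\<^sup>2 - 2 * \<rho> * x * y + y\<^sup>2) / (2 * (1 - \<rho>\<^sup>2))) *
      ((x * y * (1 - \<rho>\<^sup>2) - \<rho> * (x\<^sup>2 - 2 * \<rho> * x * y + y\<^sup>2)) / (1 - \<rho>\<^sup>2)\<^sup>2)) (at \<rho>)"
    using a by (auto intro!: derivative_eq_intros simp: divide_simps power2_eq_square) (simp add: algebra_simps)
  show ?thesis
    unfolding p bvn_density_def prod.case
    by (rule DERIV_cong[OF DERIV_mult[OF d1 d2]])
      (simp add: bvn_density_deriv_def bvn_density_def distrib_left mult_ac)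
qed

lemma bvn_density_zero: "bvn_density 0 (x, y) = phi x * phi y"
proof -
  have "exp (- (x\<^sup>2 + y\<^sup>2) / 2) = exp (- x\<^sup>2 / 2) * exp (- y\<^sup>2 / 2)"
    by (simp add: exp_add[symmetric] field_simps)
  moreover have "1 / (2 * pi) = 1 / sqrt (2 * pi) * (1 / sqrt (2 * pi))" by simp
  ultimately show ?thesis
    unfolding bvn_density_def std_normal_density_def by (simp add: mult_ac)
qed

lemma bvn_density_deriv_zero: "bvn_density_deriv 0 (x, y) = (x * phi x) * (y * phi y)"
  by (simp add: bvn_density_deriv_def bvn_density_zero mult_ac)

lemma bvn_density_nonneg:
  assumes "\<bar>\<rho>\<bar> < 1"
  shows "0 \<le> bvn_density \<rho> p"
proof -
  have "\<rho>\<^sup>2 \<le> 1" using assms by (simp add: abs_square_le_1)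
  then show ?thesis by (cases p) (simp add: bvn_density_def)
qed

lemma borel_measurable_bvn_density [measurable]: "bvn_density \<rho> \<in> borel_measurable borel"
proof -
  have "bvn_density \<rho> \<in> borel_measurable (borel \<Otimes>\<^sub>M borel)"
    unfolding bvn_density_def by measurable
  then show ?thesis by (simp add: borel_prod)
qed

lemma bvn_quadratic_form_bounds:
  fixes \<rho> x y :: real
  assumes "\<bar>\<rho>\<bar> \<le> 1/2"
  shows "(x\<^sup>2 + y\<^sup>2) / 2 \<le> x\<^sup>2 - 2 * \<rho> * x * y + y\<^sup>2"
    and "x\<^sup>2 - 2 * \<rho> * x * y + y\<^sup>2 \<le> 3/2 * (x\<^sup>2 + y\<^sup>2)"
proof -
  have cross: "\<bar>2 * \<rho> * x * y\<bar> \<le> \<bar>x * y\<bar>"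
    using mult_right_mono[of "2 * \<bar>\<rho>\<bar>" 1 "\<bar>x * y\<bar>"] assms by (simp add: abs_mult)
  have am_gm: "2 * \<bar>x * y\<bar> \<le> x\<^sup>2 + y\<^sup>2"
    using sum_squares_bound[of "\<bar>x\<bar>" "\<bar>y\<bar>"] by (simp add: abs_mult power2_eq_square)
  show "(x\<^sup>2 + y\<^sup>2) / 2 \<le> x\<^sup>2 - 2 * \<rho> * x * y + y\<^sup>2"
    using cross am_gm by argo
  show "x\<^sup>2 - 2 * \<rho> * x * y + y\<^sup>2 \<le> 3/2 * (x\<^sup>2 + y\<^sup>2)"
    using cross am_gm by argo
qed

lemma one_minus_square_ge: "\<bar>\<rho>\<bar> \<le> 1/2 \<Longrightarrow> 3/4 \<le> 1 - (\<rho>::real)\<^sup>2"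
  using power_mono[of "\<bar>\<rho>\<bar>" "1/2" 2] by (simp add: power2_eq_square)

lemma bvn_density_le:
  assumes "\<bar>\<rho>\<bar> \<le> 1/2"
  shows "bvn_density \<rho> (x, y) \<le> exp (- x\<^sup>2 / 4) * exp (- y\<^sup>2 / 4)"
proof -
  define Q where "Q = x\<^sup>2 - 2 * \<rho> * x * y + y\<^sup>2"
  have a: "3/4 \<le> 1 - \<rho>\<^sup>2" using one_minus_square_ge[OF assms] .
  have Q: "(x\<^sup>2 + y\<^sup>2) / 2 \<le> Q"
    unfolding Q_def by (rule bvn_quadratic_form_bounds(1)[OF assms])
  have "0 \<le> (x\<^sup>2 + y\<^sup>2) / 2" by simp
  then have "0 \<le> Q" using Q by linarith
  then have "Q / 2 \<le> Q / (2 * (1 - \<rho>\<^sup>2))"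
    using a by (intro divide_left_mono) auto
  then have decay: "exp (- Q / (2 * (1 - \<rho>\<^sup>2))) \<le> exp (- x\<^sup>2 / 4) * exp (- y\<^sup>2 / 4)"
    using Q by (simp add: exp_add[symmetric])
  have coeff: "1 / (2 * pi * sqrt (1 - \<rho>\<^sup>2)) \<le> 1"
  proof -
    have "sqrt (1/4) \<le> sqrt (1 - \<rho>\<^sup>2)" using a by (intro real_sqrt_le_mono) simp
    then have "1 \<le> 2 * pi * sqrt (1 - \<rho>\<^sup>2)"
      using pi_gt3 mult_mono[of 3 "2 * pi" "1/2" "sqrt (1 - \<rho>\<^sup>2)"] by (simp add: real_sqrt_divide)
    then show ?thesis by simp
  qed
  have "bvn_density \<rho> (x, y) = 1 / (2 * pi * sqrt (1 - \<rho>\<^sup>2)) * exp (- Q / (2 * (1 - \<rho>\<^sup>2)))"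
    unfolding bvn_density_def Q_def by simp
  also have "\<dots> \<le> 1 * (exp (- x\<^sup>2 / 4) * exp (- y\<^sup>2 / 4))"
    using a decay coeff by (intro mult_mono) auto
  finally show ?thesis by simp
qed

section \<open>Differentiating cell probabilities under the integral sign\<close>

definition gaussian_envelope :: "real \<Rightarrow> real" where
  "gaussian_envelope t = (1 + t\<^sup>2) * exp (- t\<^sup>2 / 4)"

definition bvn_envelope :: "real \<times> real \<Rightarrow> real" where
  "bvn_envelope p = 3 * gaussian_envelope (fst p) * gaussian_envelope (snd p)"

lemma gaussian_envelope_nonneg: "0 \<le> gaussian_envelope t"
  by (simp add: gaussian_envelope_def)

lemma bvn_envelope_nonneg: "0 \<le> bvn_envelope p"
  by (simp add: bvn_envelope_def gaussian_envelope_nonneg)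

lemma bvn_density_le_envelope:
  assumes "\<bar>\<rho>\<bar> \<le> 1/2"
  shows "bvn_density \<rho> (x, y) \<le> bvn_envelope (x, y)"
proof -
  have exp_le: "exp (- t\<^sup>2 / 4) \<le> gaussian_envelope t" for t
    by (simp add: gaussian_envelope_def)
  have "bvn_density \<rho> (x, y) \<le> exp (- x\<^sup>2 / 4) * exp (- y\<^sup>2 / 4)"
    by (rule bvn_density_le[OF assms])
  also have "\<dots> \<le> gaussian_envelope x * gaussian_envelope y"
    using exp_le by (intro mult_mono) (auto simp: gaussian_envelope_nonneg)
  also have "\<dots> \<le> bvn_envelope (x, y)"
    using gaussian_envelope_nonneg[of x] gaussian_envelope_nonneg[of y]
    by (simp add: bvn_envelope_def)
  finally show ?thesis .
qed

lemma bvn_density_deriv_le: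
  assumes \<rho>: "\<bar>\<rho>\<bar> \<le> 1/2"
  shows "\<bar>bvn_density_deriv \<rho> (x, y)\<bar> \<le> bvn_envelope (x, y)"
proof -
  define a where "a = 1 - \<rho>\<^sup>2"
  define Q where "Q = x\<^sup>2 - 2 * \<rho> * x * y + y\<^sup>2"
  define S where "S = x\<^sup>2 + y\<^sup>2"
  have a: "3/4 \<le> a" "a \<le> 1" unfolding a_def using one_minus_square_ge[OF \<rho>] by simp_all
  have Q: "S / 2 \<le> Q" "Q \<le> 3/2 * S"
    unfolding Q_def S_def using bvn_quadratic_form_bounds[OF \<rho>] by simp_all
  have S: "0 \<le> S" "2 * \<bar>x * y\<bar> \<le> S"
    unfolding S_def using sum_squares_bound[of "\<bar>x\<bar>" "\<bar>y\<bar>"] by (simp_all add: abs_mult power2_eq_square)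
  have first: "\<bar>\<rho> / a\<bar> \<le> 1"
    using a \<rho> by (simp add: abs_divide)
  have "\<bar>x * y * a - \<rho> * Q\<bar> \<le> \<bar>x * y\<bar> * a + \<bar>\<rho>\<bar> * Q"
    using a Q S by (simp add: abs_mult order_trans[OF abs_triangle_ineq4])
  also have "\<dots> \<le> \<bar>x * y\<bar> * 1 + 1/2 * Q"
    using a Q S \<rho> by (intro add_mono mult_left_mono mult_right_mono) auto
  also have "\<dots> \<le> 5/4 * S" using Q S by simp
  finally have "\<bar>x * y * a - \<rho> * Q\<bar> \<le> 5/4 * S" .
  moreover have "9/16 \<le> a\<^sup>2" using power_mono[OF a(1), of 2] by (simp add: power2_eq_square)
  ultimately have "\<bar>x * y * a - \<rho> * Q\<bar> / a\<^sup>2 \<le> (5/4 * S) / (9/16)"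
    using S by (intro frac_le) auto
  then have "\<bar>(x * y * a - \<rho> * Q) / a\<^sup>2\<bar> \<le> 20/9 * S"
    by (simp add: abs_divide)
  then have "\<bar>\<rho> / a + (x * y * a - \<rho> * Q) / a\<^sup>2\<bar> \<le> 1 + 3 * S"
    using first S abs_triangle_ineq[of "\<rho> / a" "(x * y * a - \<rho> * Q) / a\<^sup>2"] by argo
  also have "\<dots> \<le> 3 * ((1 + x\<^sup>2) * (1 + y\<^sup>2))"
    unfolding S_def by (simp add: algebra_simps)
  finally have factor: "\<bar>\<rho> / a + (x * y * a - \<rho> * Q) / a\<^sup>2\<bar> \<le> 3 * ((1 + x\<^sup>2) * (1 + y\<^sup>2))" .
  have "\<bar>bvn_density_deriv \<rho> (x, y)\<bar> = bvn_density \<rho> (x, y) * \<bar>\<rho> / a + (x * y * a - \<rho> * Q) / a\<^sup>2\<bar>"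
    unfolding bvn_density_deriv_def a_def Q_def
    using bvn_density_nonneg[of \<rho> "(x, y)"] \<rho> by (simp add: abs_mult)
  also have "\<dots> \<le> (exp (- x\<^sup>2 / 4) * exp (- y\<^sup>2 / 4)) * (3 * ((1 + x\<^sup>2) * (1 + y\<^sup>2)))"
    using bvn_density_le[OF \<rho>] factor by (intro mult_mono) auto
  also have "\<dots> = bvn_envelope (x, y)"
    by (simp add: bvn_envelope_def gaussian_envelope_def mult_ac)
  finally show ?thesis .
qed

lemma bvn_difference_quotient_le:
  assumes "\<bar>r\<bar> \<le> 1/2"
  shows "\<bar>(bvn_density r p - bvn_density 0 p) / r\<bar> \<le> bvn_envelope p"
proof -
  obtain x y where p: "p = (x, y)" by (cases p)
  have "norm (bvn_density r p - bvn_density 0 p) \<le> bvn_envelope p * norm (r - 0)"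
    unfolding p
  proof (rule field_differentiable_bound[of "{-1/2..1/2}"])
    show "((\<lambda>r. bvn_density r (x, y)) has_field_derivative bvn_density_deriv z (x, y))
        (at z within {-1/2..1/2})" if "z \<in> {-1/2..1/2}" for z
    proof (rule has_field_derivative_at_within, rule bvn_density_has_real_derivative)
      show "\<bar>z\<bar> < 1" using that by auto
    qed
    show "norm (bvn_density_deriv z (x, y)) \<le> bvn_envelope (x, y)"
      if "z \<in> {-1/2..1/2}" for z
      using that bvn_density_deriv_le[of z x y] by auto
  qed (use assms in auto)
  then show ?thesis
    by (cases "r = 0") (simp_all add: abs_divide pos_divide_le_eq bvn_envelope_nonneg)
qed

lemma integrable_gaussian_envelope: "integrable lborel gaussian_envelope"
proof -
  have density: "normal_density 0 (sqrt 2) t = exp (- t\<^sup>2 / 4) / sqrt (4 * pi)" for t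
    by (simp add: normal_density_def)
  have "integrable lborel (\<lambda>t. sqrt (4 * pi) *
      (normal_density 0 (sqrt 2) t * (t - 0) ^ 0 + normal_density 0 (sqrt 2) t * (t - 0) ^ 2))"
    by (intro integrable_mult_right Bochner_Integration.integrable_add integrable_normal_moment) auto
  moreover have "(\<lambda>t. sqrt (4 * pi) *
      (normal_density 0 (sqrt 2) t * (t - 0) ^ 0 + normal_density 0 (sqrt 2) t * (t - 0) ^ 2))
      = gaussian_envelope"
    by (simp add: fun_eq_iff density gaussian_envelope_def field_simps)
  ultimately show ?thesis by (simp only:)
qed

lemma
  fixes f g :: "real \<Rightarrow> real"
  assumes f: "integrable lborel f" and g: "integrable lborel g"
  shows integrable_lborel_product: "integrable lborel (\<lambda>p::real \<times> real. f (fst p) * g (snd p))"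
    and integral_lborel_product:
      "(LINT p|lborel. f (fst p) * g (snd p)) = (LBINT x. f x) * (LBINT y. g y)"
proof -
  have [measurable]: "f \<in> borel_measurable lborel" "g \<in> borel_measurable lborel"
    using f g by auto
  have "integrable (lborel \<Otimes>\<^sub>M lborel) (\<lambda>p::real \<times> real. f (fst p) * g (snd p))"
  proof (rule lborel_pair.Fubini_integrable)
    have "integrable lborel (\<lambda>x. \<bar>f x\<bar> * (LBINT y. \<bar>g y\<bar>))"
      by (intro integrable_mult_left integrable_abs f)
    then show "integrable lborel (\<lambda>x. LBINT y. norm (f (fst (x, y)) * g (snd (x, y))))"
      by (simp add: abs_mult)
  qed (use g in auto)
  then show "integrable lborel (\<lambda>p::real \<times> real. f (fst p) * g (snd p))"
    and "(LINT p|lborel. f (fst p) * g (snd p)) = (LBINT x. f x) * (LBINT y. g y)"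
    using lborel_pair.integral_fst'[of "\<lambda>p. f (fst p) * g (snd p)"] by (simp_all add: lborel_prod)
qed

lemma integrable_bvn_envelope: "integrable lborel bvn_envelope"
  unfolding bvn_envelope_def[abs_def]
  using integrable_lborel_product[OF integrable_gaussian_envelope integrable_gaussian_envelope]
  by (simp add: mult.assoc)

lemma integrable_bvn_density_indicator:
  assumes "\<bar>\<rho>\<bar> \<le> 1/2" and [measurable]: "S \<in> sets borel"
  shows "integrable lborel (\<lambda>p. indicator S p * bvn_density \<rho> p)"
proof (rule Bochner_Integration.integrable_bound[OF integrable_bvn_envelope])
  have "\<bar>indicator S p * bvn_density \<rho> p\<bar> \<le> bvn_envelope p" for p
    using bvn_density_le_envelope[OF assms(1)] bvn_density_nonneg[of \<rho> p] bvn_envelope_nonneg[of p] assms(1)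
    by (cases p) (auto simp: indicator_def)
  then show "AE p in lborel. norm (indicator S p * bvn_density \<rho> p) \<le> norm (bvn_envelope p)"
    by (simp add: bvn_envelope_nonneg)
qed measurable

lemma borel_measurable_bvn_density_deriv [measurable]:
  "bvn_density_deriv \<rho> \<in> borel_measurable borel"
proof -
  have "bvn_density_deriv \<rho> \<in> borel_measurable (borel \<Otimes>\<^sub>M borel)"
    unfolding bvn_density_deriv_def bvn_density_def by measurable
  then show ?thesis by (simp add: borel_prod)
qed

lemma has_real_derivative_bvn_set_integral:
  assumes [measurable]: "S \<in> sets borel"
  shows "((\<lambda>r. LINT p|lborel. indicator S p * bvn_density r p) has_real_derivative
    (LINT p|lborel. indicator S p * bvn_density_deriv 0 p)) (at 0)"
proof -
  define F where "F r = (LINT p|lborel. indicator S p * bvn_density r p)" for r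
  note F_int = integrable_bvn_density_indicator[OF _ assms]
  have "((\<lambda>r. (F r - F 0) / (r - 0)) \<longlongrightarrow> (LINT p|lborel. indicator S p * bvn_density_deriv 0 p))
      (at 0 within {-1/2<..<1/2})"
    unfolding tendsto_at_iff_sequentially comp_def
  proof (intro allI impI)
    fix X :: "nat \<Rightarrow> real"
    assume X: "\<forall>i. X i \<in> {-1/2<..<1/2} - {0}" and X0: "X \<longlonglongrightarrow> 0"
    have X_le: "\<bar>X i\<bar> \<le> 1/2" for i using X[rule_format, of i] by auto
    define q where "q i p = indicator S p * ((bvn_density (X i) p - bvn_density 0 p) / X i)" for i p
    have "(F (X i) - F 0) / (X i - 0) = (LINT p|lborel. q i p)" for i
    proof -
      have "F (X i) - F 0 = (LINT p|lborel. indicator S p * bvn_density (X i) p - indicator S p * bvn_density 0 p)"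
        unfolding F_def using F_int[OF X_le[of i]] F_int[of 0] by simp
      then show ?thesis
        unfolding q_def by (simp add: right_diff_distrib)
    qed
    moreover have "(\<lambda>i. LINT p|lborel. q i p) \<longlonglongrightarrow> (LINT p|lborel. indicator S p * bvn_density_deriv 0 p)"
    proof (rule integral_dominated_convergence[where w = bvn_envelope])
      show "AE p in lborel. (\<lambda>i. q i p) \<longlonglongrightarrow> indicator S p * bvn_density_deriv 0 p"
      proof (rule AE_I2)
        fix p :: "real \<times> real"
        have "((\<lambda>r. (bvn_density r p - bvn_density 0 p) / (r - 0)) \<longlongrightarrow> bvn_density_deriv 0 p) (at 0)"
          using bvn_density_has_real_derivative[of 0 p] by (simp add: has_field_derivative_iff)
        moreover have "filterlim X (at 0) sequentially"
          using X X0 by (auto simp: filterlim_at)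
        ultimately have "(\<lambda>i. (bvn_density (X i) p - bvn_density 0 p) / (X i - 0)) \<longlonglongrightarrow> bvn_density_deriv 0 p"
          by (rule filterlim_compose)
        then show "(\<lambda>i. q i p) \<longlonglongrightarrow> indicator S p * bvn_density_deriv 0 p"
          unfolding q_def by (intro tendsto_mult_left) simp
      qed
      show "AE p in lborel. norm (q i p) \<le> bvn_envelope p" for i
        using bvn_difference_quotient_le[OF X_le[of i]]
        by (auto simp: q_def indicator_def bvn_envelope_nonneg)
    qed (use integrable_bvn_envelope in \<open>auto simp: q_def\<close>)
    ultimately show "(\<lambda>i. (F (X i) - F 0) / (X i - 0))
        \<longlonglongrightarrow> (LINT p|lborel. indicator S p * bvn_density_deriv 0 p)"
      by simp
  qed
  then show ?thesis
    using at_within_open[of 0 "{-1/2<..<1/2::real}"]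
    by (simp add: has_field_derivative_iff F_def)
qed

lemma integral_indicator_times_product:
  fixes f g :: "real \<Rightarrow> real"
  assumes "A \<in> sets borel" "B \<in> sets borel" "integrable lborel f" "integrable lborel g"
  shows "(LINT p|lborel. indicator (A \<times> B) p * (f (fst p) * g (snd p)))
    = (LBINT x:A. f x) * (LBINT y:B. g y)"
proof -
  have "(\<lambda>p. indicator (A \<times> B) p * (f (fst p) * g (snd p)))
      = (\<lambda>p. (indicator A (fst p) * f (fst p)) * (indicator B (snd p) * g (snd p)))"
    by (auto simp: fun_eq_iff indicator_times)
  moreover have "integrable lborel (\<lambda>x. indicator A x * f x)" "integrable lborel (\<lambda>y. indicator B y * g y)"
    using set_integrable_if_integrable assms by (simp_all add: set_integrable_def)
  ultimately show ?thesis
    using integral_lborel_product[of "\<lambda>x. indicator A x * f x" "\<lambda>y. indicator B y * g y"]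
    by (simp add: set_lebesgue_integral_def)
qed

lemma bvn_cell_at_zero:
  assumes "A \<in> sets borel" "B \<in> sets borel"
  shows "(LINT p|lborel. indicator (A \<times> B) p * bvn_density 0 p)
    = (LBINT x:A. phi x) * (LBINT y:B. phi y)"
proof -
  have "bvn_density 0 p = phi (fst p) * phi (snd p)" for p
    by (cases p) (simp add: bvn_density_zero)
  then show ?thesis
    using integral_indicator_times_product[OF assms integrable_std_normal_density integrable_std_normal_density]
    by simp
qed

lemma bvn_cell_has_real_derivative_at_zero:
  assumes "A \<in> sets borel" "B \<in> sets borel"
  shows "((\<lambda>r. LINT p|lborel. indicator (A \<times> B) p * bvn_density r p) has_real_derivative
    (LBINT x:A. x * phi x) * (LBINT y:B. y * phi y)) (at 0)"
proof -
  have "bvn_density_deriv 0 p = (fst p * phi (fst p)) * (snd p * phi (snd p))" for p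
    by (cases p) (simp add: bvn_density_deriv_zero)
  moreover have "A \<times> B \<in> sets borel"
    using assms by (simp add: borel_prod[symmetric])
  ultimately show ?thesis
    using has_real_derivative_bvn_set_integral[of "A \<times> B"]
      integral_indicator_times_product[OF assms integrable_std_normal_first_moment integrable_std_normal_first_moment]
    by simp
qed

section \<open>Fisher information at \<open>\<rho> = 0\<close>\<close>

lemma sum_square_ratio_product:
  fixes p q :: "'a \<Rightarrow> real"
  shows "(\<Sum>i\<in>I. \<Sum>j\<in>I. (q i * q j)\<^sup>2 / (p i * p j)) = (\<Sum>i\<in>I. (q i)\<^sup>2 / p i)\<^sup>2"
proof -
  have "(q i * q j)\<^sup>2 / (p i * p j) = (q i)\<^sup>2 / p i * ((q j)\<^sup>2 / p j)" for i j
    by (simp add: power_mult_distrib)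
  then have "(\<Sum>i\<in>I. \<Sum>j\<in>I. (q i * q j)\<^sup>2 / (p i * p j))
      = (\<Sum>i\<in>I. (q i)\<^sup>2 / p i) * (\<Sum>j\<in>I. (q j)\<^sup>2 / p j)"
    by (simp only: sum_product)
  then show ?thesis
    by (simp only: power2_eq_square)
qed

lemma code_set_borel [measurable]: "code_set w i \<in> sets borel"
  by (simp add: code_set_def)

lemma code_fisher_sum:
  assumes "0 < w"
  shows "(\<Sum>i<4. (LBINT t:code_set w i. t * phi t)\<^sup>2 / (LBINT t:code_set w i. phi t)) = 2 * g w / pi"
proof -
  define c where "c = phi 0"
  define a where "a = exp (- w\<^sup>2 / 2)"
  have phi_w: "phi w = c * a"
    by (simp add: c_def a_def std_normal_density_def)
  have c2: "c\<^sup>2 = 1 / (2 * pi)"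
    by (simp add: c_def std_normal_density_def power_divide)
  have a2: "exp (- w\<^sup>2) = a\<^sup>2"
    by (simp add: a_def power2_eq_square exp_add[symmetric])
  have sum4: "(\<Sum>i<4. f i) = f 0 + f 1 + f 2 + f 3" for f :: "nat \<Rightarrow> real"
    by (simp add: eval_nat_numeral)
  have "(\<Sum>i<4. (LBINT t:code_set w i. t * phi t)\<^sup>2 / (LBINT t:code_set w i. phi t))
      = (c * a)\<^sup>2 / (1 - Phi w) + (c * a - c)\<^sup>2 / (Phi w - 1/2)
        + (c - c * a)\<^sup>2 / (Phi w - 1/2) + (c * a)\<^sup>2 / (1 - Phi w)"
    unfolding sum4 using assms
    by (simp add: code_set_def std_normal_first_moment_Iic std_normal_first_moment_Ioi
        std_normal_first_moment_Ioc std_normal_Ioi std_normal_Ioc Phi_minus Phi_zero phi_w c_def[symmetric]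
        Phi_def[symmetric])
  also have "\<dots> = 4 * c\<^sup>2 * g w"
  proof -
    define X where "X = (1 - a)\<^sup>2 / (Phi w - 1/2)"
    define Y where "Y = a\<^sup>2 / (1 - Phi w)"
    have "(c * a)\<^sup>2 / (1 - Phi w) = c\<^sup>2 * Y"
      by (simp add: Y_def power_mult_distrib)
    moreover have "(c * a - c)\<^sup>2 / (Phi w - 1/2) = c\<^sup>2 * X" "(c - c * a)\<^sup>2 / (Phi w - 1/2) = c\<^sup>2 * X"
      by (simp_all add: X_def power2_eq_square algebra_simps)
    moreover have "X + Y = 2 * g w"
      by (simp add: g_def X_def Y_def a2 a_def mult.commute)
    moreover have "c\<^sup>2 * Y + c\<^sup>2 * X + c\<^sup>2 * X + c\<^sup>2 * Y = 2 * c\<^sup>2 * (X + Y)"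
      by (simp add: algebra_simps)
    ultimately show ?thesis by simp
  qed
  finally show ?thesis
    by (simp add: c2)
qed

lemma I2_zero:
  assumes "0 < w"
  shows "I2 k 0 w = real k * (2 * g w / pi)\<^sup>2"
proof -
  define p where "p i = (LBINT t:code_set w i. phi t)" for i
  define q where "q i = (LBINT t:code_set w i. t * phi t)" for i
  have "cellP 0 w i j = p i * p j" for i j
    unfolding cellP_def p_def by (rule bvn_cell_at_zero) simp_all
  moreover have "deriv (\<lambda>r. cellP r w i j) 0 = q i * q j" for i j
    unfolding cellP_def q_def
    by (rule DERIV_imp_deriv, rule bvn_cell_has_real_derivative_at_zero) simp_all
  ultimately show ?thesis
    using code_fisher_sum[OF assms]
    by (simp add: I2_def sum_square_ratio_product p_def q_def)
qed

lemma I1_zero: "I1 k 0 = 4 * real k / pi\<^sup>2"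
  by (simp add: I1_def)

theorem theorem2:
  fixes w :: real and k :: nat
  assumes "w > 0" and "k \<ge> 1"
  shows "R k 0 w = (g w)\<^sup>2"
proof -
  have "I2 k 0 w = real k * (2 * g w / pi)\<^sup>2"
    using assms(1) by (rule I2_zero)
  moreover have "I1 k 0 = 4 * real k / pi\<^sup>2"
    by (rule I1_zero)
  ultimately show ?thesis
    using assms(2) by (simp add: R_def power_divide)
qed

end
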